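(* Let $m\ge 2$ be even, $n\ge2$, and $c\in\mathbb{R}^n$ with $c_{i_1}+\cdots+c_{i_m}\neq0$ for all $i_1,\dots,i_m\in[n]$. Let $\mathcal{C}$ be the Cauchy tensor of order $m$ and dimension $n$ with generating vector $c$. Then the following are equivalent: (i) $\mathcal{C}$ is an SOS tensor; (ii) $\mathcal{C}$ is positive semi-definite; (iii) $\mathcal{C}$ is a completely positive tensor; (iv) $c_i>0$ for all $i\in[n]$.
   Context: $[n]=\{1,\dots,n\}$. The (symmetric) Cauchy tensor with generating vector $c$ is $\mathcal{C}=(c_{i_1\cdots i_m})$, $c_{i_1\cdots i_m}=\frac{1}{c_{i_1}+c_{i_2}+\cdots+c_{i_m}}$. For $x\in\mathbb{R}^n$, $\mathcal{C}x^m=\sum_{i_1,\dots,i_m}c_{i_1\cdots i_m}x_{i_1}\cdots x_{i_m}$. Positive semi-definite: $\mathcal{C}x^m\ge0$ for all $x\in\mathbb{R}^n$. SOS tensor (order $m=2k$): $x\mapsto\mathcal{C}x^m$ is a sum of squares of polynomials of degree $k$. Completely positive: $\mathcal{C}=\sum_{j=1}^r x_j^m$ for some $x_j\in\mathbb{R}^n_+$, where $x^m$ is the rank-one tensor with entries $x_{i_1}\cdots x_{i_m}$. *)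

theory Defs
  imports Complex_Main
begin

definition idx :: "nat \<Rightarrow> nat \<Rightarrow> nat list set" where
  "idx m n = {is. length is = m \<and> set is \<subseteq> {1..n}}"

text \<open>A real tensor of order m, dimension n: a function on index lists (values on idx m n matter).\<close>
type_synonym tensor = "nat list \<Rightarrow> real"

definition cauchy_tensor :: "(nat \<Rightarrow> real) \<Rightarrow> tensor" where
  "cauchy_tensor c = (\<lambda>is. 1 / sum_list (map c is))"

definition tensor_form :: "nat \<Rightarrow> nat \<Rightarrow> tensor \<Rightarrow> (nat \<Rightarrow> real) \<Rightarrow> real" where
  "tensor_form m n T x = (\<Sum>is\<in>idx m n. T is * prod_list (map x is))"

definition psd_tensor :: "nat \<Rightarrow> nat \<Rightarrow> tensor \<Rightarrow> bool" where
  "psd_tensor m n T \<longleftrightarrow> (\<forall>x. tensor_form m n T x \<ge> 0)"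

definition poly_deg_le :: "nat \<Rightarrow> nat \<Rightarrow> ((nat \<Rightarrow> real) \<Rightarrow> real) \<Rightarrow> bool" where
  "poly_deg_le n k p \<longleftrightarrow> (\<exists>a :: nat list \<Rightarrow> real. \<forall>x.
     p x = (\<Sum>is\<in>{is. length is \<le> k \<and> set is \<subseteq> {1..n}}. a is * prod_list (map x is)))"

definition sos_tensor :: "nat \<Rightarrow> nat \<Rightarrow> tensor \<Rightarrow> bool" where
  "sos_tensor m n T \<longleftrightarrow> (\<exists>(r::nat) (ps :: nat \<Rightarrow> (nat \<Rightarrow> real) \<Rightarrow> real).
     (\<forall>j<r. poly_deg_le n (m div 2) (ps j)) \<and>
     (\<forall>x. tensor_form m n T x = (\<Sum>j<r. (ps j x)^2)))"

definition completely_positive :: "nat \<Rightarrow> nat \<Rightarrow> tensor \<Rightarrow> bool" where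
  "completely_positive m n T \<longleftrightarrow> (\<exists>(r::nat) (xs :: nat \<Rightarrow> nat \<Rightarrow> real).
     (\<forall>j<r. \<forall>i\<in>{1..n}. xs j i \<ge> 0) \<and>
     (\<forall>is\<in>idx m n. T is = (\<Sum>j<r. prod_list (map (xs j) is))))"

end

theory Submission
  imports Defs
begin

text \<open>
  The four conditions are proved equivalent along the cycle SOS \<open>\<Rightarrow>\<close> PSD \<open>\<Rightarrow>\<close> positivity
  \<open>\<Rightarrow>\<close> CP \<open>\<Rightarrow>\<close> SOS. Evaluating the form at the unit vector \<open>e\<^sub>i\<close> gives \<open>1 / (m c\<^sub>i)\<close>, so
  PSD forces \<open>c\<^sub>i > 0\<close>; a CP tensor \<open>\<Sum>\<^sub>j x\<^sub>j\<^sup>m\<close> has the form \<open>\<Sum>\<^sub>j \<langle>x\<^sub>j, y\<rangle>\<^sup>m\<close>, a sum of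
  squares for even \<open>m\<close>. For positive \<open>c\<close>, the identity \<open>1 / s = \<integral>\<^sub>0\<^sup>\<infinity> exp (- t s) dt\<close> at
  \<open>s = c\<^sub>i\<^sub>1 + \<dots> + c\<^sub>i\<^sub>m\<close> writes the Cauchy tensor as an integral of the rank-one tensors
  \<open>(exp (- t c\<^sub>i))\<^sub>i\<^sup>m\<close>; its Riemann sums are CP, and the CP cone is closed because, by
  Caratheodory, \<open>|idx m n|\<close> normalized rank-one terms suffice and these range over
  a compact set.
\<close>

lemma prod_list_map_mult:
  fixes f g :: "'a \<Rightarrow> 'b::comm_monoid_mult"
  shows "prod_list (map (\<lambda>i. f i * g i) xs) = prod_list (map f xs) * prod_list (map g xs)"
  by (induction xs) (simp_all add: mult_ac)

lemma prod_list_map_const_mult: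
  fixes f :: "'a \<Rightarrow> 'b::comm_monoid_mult"
  shows "prod_list (map (\<lambda>i. a * f i) xs) = a ^ length xs * prod_list (map f xs)"
  by (induction xs) (simp_all add: mult_ac)

lemma prod_list_map_exp:
  fixes f :: "'a \<Rightarrow> real"
  shows "prod_list (map (\<lambda>i. exp (f i)) xs) = exp (sum_list (map f xs))"
  by (induction xs) (simp_all add: exp_add)

lemma sum_list_map_pos:
  fixes f :: "'a \<Rightarrow> 'b::ordered_comm_monoid_add"
  assumes "xs \<noteq> []" and "\<forall>i\<in>set xs. f i > 0"
  shows "sum_list (map f xs) > 0"
  using assms
proof (induction xs)
  case (Cons a xs)
  then show ?case by (cases "xs = []") (auto intro: add_pos_pos)
qed simp

lemma power_sum_eq_sum_lists:
  fixes f :: "'a \<Rightarrow> 'b::comm_semiring_1"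
  assumes "finite A"
  shows "(\<Sum>i\<in>A. f i) ^ k = (\<Sum>xs\<in>{xs. set xs \<subseteq> A \<and> length xs = k}. prod_list (map f xs))"
proof (induction k)
  case 0
  have "{xs. set xs \<subseteq> A \<and> length xs = 0} = {[]}" by auto
  then show ?case by simp
next
  case (Suc k)
  let ?L = "{xs. set xs \<subseteq> A \<and> length xs = k}"
  have inj: "inj_on (\<lambda>(xs, a). a # xs) (?L \<times> A)" by (auto simp: inj_on_def)
  have "(\<Sum>i\<in>A. f i) ^ Suc k = (\<Sum>xs\<in>?L. prod_list (map f xs)) * (\<Sum>a\<in>A. f a)"
    unfolding power_Suc2 Suc ..
  also have "\<dots> = (\<Sum>xs\<in>?L. \<Sum>a\<in>A. prod_list (map f xs) * f a)"
    by (rule sum_product)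
  also have "\<dots> = (\<Sum>(xs, a)\<in>?L \<times> A. prod_list (map f (a # xs)))"
    by (simp add: sum.cartesian_product mult.commute)
  also have "\<dots> = (\<Sum>xs\<in>{xs. set xs \<subseteq> A \<and> length xs = Suc k}. prod_list (map f xs))"
    unfolding lists_length_Suc_eq by (subst sum.reindex[OF inj]) (simp add: case_prod_beta')
  finally show ?case .
qed

lemma finite_idx: "finite (idx m n)"
  unfolding idx_def using finite_lists_length_eq[of "{1..n}" m] by (simp add: conj_commute)

lemma sum_idx_prod_list:
  fixes u :: "nat \<Rightarrow> real"
  shows "(\<Sum>is\<in>idx m n. prod_list (map u is)) = (\<Sum>i\<in>{1..n}. u i) ^ m"
  unfolding idx_def conj_commute[of "length _ = m"] by (rule power_sum_eq_sum_lists[symmetric]) simp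

lemma tensor_form_rank_one:
  "tensor_form m n (\<lambda>is. prod_list (map x is)) y = (\<Sum>i\<in>{1..n}. x i * y i) ^ m"
  by (simp add: tensor_form_def sum_idx_prod_list prod_list_map_mult[symmetric])

lemma poly_deg_le_linear_power: "poly_deg_le n k (\<lambda>y. (\<Sum>i\<in>{1..n}. a i * y i) ^ k)"
proof -
  define b where "b = (\<lambda>is. if length is = k then prod_list (map a is) else 0)"
  have "(\<Sum>i\<in>{1..n}. a i * y i) ^ k
      = (\<Sum>is\<in>{is. length is \<le> k \<and> set is \<subseteq> {1..n}}. b is * prod_list (map y is))" for y
  proof -
    have "(\<Sum>i\<in>{1..n}. a i * y i) ^ k
        = (\<Sum>is\<in>{is. set is \<subseteq> {1..n} \<and> length is = k}. b is * prod_list (map y is))"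
      by (auto simp: power_sum_eq_sum_lists b_def prod_list_map_mult intro!: sum.cong)
    also have "\<dots> = (\<Sum>is\<in>{is. length is \<le> k \<and> set is \<subseteq> {1..n}}. b is * prod_list (map y is))"
      using finite_lists_length_le[of "{1..n}" k]
      by (intro sum.mono_neutral_left) (auto simp: b_def conj_commute)
    finally show ?thesis .
  qed
  then show ?thesis unfolding poly_deg_le_def by blast
qed

lemma sos_tensor_imp_psd_tensor: "sos_tensor m n T \<Longrightarrow> psd_tensor m n T"
  unfolding sos_tensor_def psd_tensor_def by (auto intro!: sum_nonneg)

lemma completely_positive_imp_sos_tensor:
  assumes "completely_positive m n T" and "even m"
  shows "sos_tensor m n T"
proof -
  obtain r :: nat and xs where eq: "\<forall>is\<in>idx m n. T is = (\<Sum>j<r. prod_list (map (xs j) is))"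
    using assms(1) unfolding completely_positive_def by blast
  define ps where "ps = (\<lambda>j y. (\<Sum>i\<in>{1..n}. xs j i * y i) ^ (m div 2))"
  have "tensor_form m n T y = (\<Sum>j<r. (ps j y)\<^sup>2)" for y
  proof -
    have "tensor_form m n T y = (\<Sum>j<r. tensor_form m n (\<lambda>is. prod_list (map (xs j) is)) y)"
      unfolding tensor_form_def using eq
      by (simp add: sum_distrib_right sum.swap[where A = "idx m n"])
    also have "\<dots> = (\<Sum>j<r. (ps j y)\<^sup>2)"
      using assms(2) by (simp add: tensor_form_rank_one ps_def power_mult[symmetric])
    finally show ?thesis .
  qed
  moreover have "poly_deg_le n (m div 2) (ps j)" for j
    unfolding ps_def by (rule poly_deg_le_linear_power)
  ultimately show ?thesis unfolding sos_tensor_def by blast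
qed

lemma tensor_form_unit_vector:
  assumes "i \<in> {1..n}"
  shows "tensor_form m n T (\<lambda>j. if j = i then 1 else 0) = T (replicate m i)"
proof -
  have "prod_list (map (\<lambda>j. if j = i then 1 else 0::real) is) = (if is = replicate m i then 1 else 0)"
    if "is \<in> idx m n" for "is"
    using that by (induction "is" arbitrary: m) (auto simp: idx_def)
  then have "tensor_form m n T (\<lambda>j. if j = i then 1 else 0)
      = (\<Sum>is\<in>idx m n. if is = replicate m i then T is else 0)"
    unfolding tensor_form_def by (intro sum.cong) auto
  also have "\<dots> = T (replicate m i)"
    using finite_idx[of m n] assms by (simp add: idx_def set_replicate_conv_if)
  finally show ?thesis .
qed

lemma psd_cauchy_tensor_imp_pos:
  assumes "psd_tensor m n (cauchy_tensor c)" and "m \<ge> 1" and "c i \<noteq> 0" and "i \<in> {1..n}"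
  shows "c i > 0"
proof -
  have "0 \<le> tensor_form m n (cauchy_tensor c) (\<lambda>j. if j = i then 1 else 0)"
    using assms(1) unfolding psd_tensor_def by blast
  also have "\<dots> = 1 / (real m * c i)"
    using assms(4) by (simp add: tensor_form_unit_vector cauchy_tensor_def sum_list_replicate)
  finally show ?thesis
    using assms(2,3) by (simp add: zero_le_divide_1_iff zero_le_mult_iff)
qed

lemma exists_linear_dependence:
  fixes g :: "'j \<Rightarrow> 'i \<Rightarrow> 'a::field"
  assumes "finite I" and "finite J" and "card I < card J"
  shows "\<exists>l. (\<exists>j\<in>J. l j \<noteq> 0) \<and> (\<forall>i\<in>I. (\<Sum>j\<in>J. l j * g j i) = 0)"
  using assms
proof (induction I arbitrary: J g rule: finite_induct)
  case empty
  then show ?case by (intro exI[of _ "\<lambda>_. 1"]) (auto simp: card_gt_0_iff)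
next
  case (insert i0 I)
  show ?case
  proof (cases "\<forall>j\<in>J. g j i0 = 0")
    case True
    then show ?thesis using insert.IH[of J g] insert.prems insert.hyps by auto
  next
    case False
    then obtain j0 where j0: "j0 \<in> J" "g j0 i0 \<noteq> 0" by auto
    define h where "h = (\<lambda>j i. g j i - g j i0 / g j0 i0 * g j0 i)"
    have "card I < card (J - {j0})"
      using insert.prems insert.hyps j0 by (simp add: card_Diff_singleton)
    then obtain \<mu> where \<mu>: "\<exists>j\<in>J - {j0}. \<mu> j \<noteq> 0" "\<forall>i\<in>I. (\<Sum>j\<in>J - {j0}. \<mu> j * h j i) = 0"
      using insert.IH[of "J - {j0}" h] insert.prems by auto
    define S where "S = (\<Sum>j\<in>J - {j0}. \<mu> j * g j i0)"
    define l where "l = (\<lambda>j. if j = j0 then - S / g j0 i0 else \<mu> j)"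
    have l_sum: "(\<Sum>j\<in>J. l j * g j i) = (\<Sum>j\<in>J - {j0}. \<mu> j * g j i) - S / g j0 i0 * g j0 i" for i
    proof -
      have "(\<Sum>j\<in>J - {j0}. l j * g j i) = (\<Sum>j\<in>J - {j0}. \<mu> j * g j i)"
        by (intro sum.cong) (auto simp: l_def)
      then show ?thesis
        using j0 insert.prems by (simp add: sum.remove[of J j0] l_def)
    qed
    have "(\<Sum>j\<in>J. l j * g j i) = 0" if "i \<in> I" for i
    proof -
      have "(\<Sum>j\<in>J - {j0}. \<mu> j * g j i) = (\<Sum>j\<in>J - {j0}. \<mu> j * h j i) + S / g j0 i0 * g j0 i"
        by (simp add: h_def S_def algebra_simps sum_subtractf sum_distrib_left sum_distrib_right sum_divide_distrib)
      then show ?thesis using \<mu>(2) that l_sum by simp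
    qed
    moreover have "(\<Sum>j\<in>J. l j * g j i0) = 0"
      using l_sum[of i0] j0(2) by (simp add: S_def)
    moreover obtain j1 where "j1 \<in> J" "j1 \<noteq> j0" "\<mu> j1 \<noteq> 0" using \<mu>(1) by blast
    then have "\<exists>j\<in>J. l j \<noteq> 0" by (auto simp: l_def)
    ultimately show ?thesis by auto
  qed
qed

lemma conic_combination_drop_term:
  fixes g :: "'j \<Rightarrow> 'i \<Rightarrow> 'a::linordered_field"
  assumes "finite I" and "finite J" and "card I < card J" and "\<forall>j\<in>J. w j \<ge> 0"
  shows "\<exists>j0\<in>J. \<exists>w'. (\<forall>j\<in>J. w' j \<ge> 0) \<and> (\<forall>i\<in>I. (\<Sum>j\<in>J. w j * g j i) = (\<Sum>j\<in>J - {j0}. w' j * g j i))"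
proof -
  obtain l where l: "\<exists>j\<in>J. l j > 0" "\<forall>i\<in>I. (\<Sum>j\<in>J. l j * g j i) = 0"
  proof -
    obtain l0 where l0: "\<exists>j\<in>J. l0 j \<noteq> 0" "\<forall>i\<in>I. (\<Sum>j\<in>J. l0 j * g j i) = 0"
      using exists_linear_dependence[OF assms(1-3)] by blast
    show thesis
    proof (cases "\<exists>j\<in>J. l0 j > 0")
      case True
      then show ?thesis using l0(2) that by blast
    next
      case False
      then have "\<exists>j\<in>J. - l0 j > 0" using l0(1) by force
      moreover have "\<forall>i\<in>I. (\<Sum>j\<in>J. - l0 j * g j i) = 0" using l0(2) by (simp add: sum_negf)
      ultimately show ?thesis using that[of "\<lambda>j. - l0 j"] by blast
    qed
  qed
  \<comment> \<open>subtract the largest multiple of the relation that keeps all weights nonnegative\<close>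
  define P where "P = {j\<in>J. l j > 0}"
  have P: "finite P" "P \<noteq> {}" using assms(2) l(1) by (auto simp: P_def)
  define t where "t = Min ((\<lambda>j. w j / l j) ` P)"
  have "t \<in> (\<lambda>j. w j / l j) ` P" unfolding t_def using P by (intro Min_in) auto
  then obtain j0 where j0: "j0 \<in> P" "t = w j0 / l j0" by blast
  have t_le: "t \<le> w j / l j" if "j \<in> P" for j using P that by (simp add: t_def)
  have t_nonneg: "t \<ge> 0" using j0 assms(4) by (auto simp: P_def)
  define w' where "w' = (\<lambda>j. w j - t * l j)"
  have "w' j \<ge> 0" if "j \<in> J" for j
  proof (cases "l j > 0")
    case True
    then show ?thesis using t_le[of j] that by (simp add: P_def w'_def pos_le_divide_eq mult.commute)
  next
    case False
    then have "t * l j \<le> 0" using t_nonneg by (simp add: mult_nonneg_nonpos)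
    moreover have "w j \<ge> 0" using assms(4) that by blast
    ultimately show ?thesis unfolding w'_def by linarith
  qed
  moreover have "(\<Sum>j\<in>J. w j * g j i) = (\<Sum>j\<in>J - {j0}. w' j * g j i)" if "i \<in> I" for i
  proof -
    have "(\<Sum>j\<in>J. w' j * g j i) = (\<Sum>j\<in>J. w j * g j i) - t * (\<Sum>j\<in>J. l j * g j i)"
      by (simp add: w'_def algebra_simps sum_subtractf sum_distrib_left)
    also have "\<dots> = (\<Sum>j\<in>J. w j * g j i)" using l(2) that by simp
    finally show ?thesis
      using j0 assms(2) by (simp add: sum.remove[of J j0] P_def w'_def)
  qed
  ultimately show ?thesis using j0(1) by (auto simp: P_def)
qed

lemma conic_caratheodory:
  fixes g :: "'j \<Rightarrow> 'i \<Rightarrow> 'a::linordered_field"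
  assumes "finite I" and "finite J" and "\<forall>j\<in>J. w j \<ge> 0"
  shows "\<exists>J'\<subseteq>J. card J' \<le> card I \<and>
           (\<exists>w'. (\<forall>j\<in>J'. w' j \<ge> 0) \<and> (\<forall>i\<in>I. (\<Sum>j\<in>J. w j * g j i) = (\<Sum>j\<in>J'. w' j * g j i)))"
  using assms(2,3)
proof (induction "card J" arbitrary: J w rule: less_induct)
  case less
  show ?case
  proof (cases "card J \<le> card I")
    case True
    then show ?thesis using less.prems by blast
  next
    case False
    then obtain j0 w' where j0: "j0 \<in> J" and w': "\<forall>j\<in>J. w' j \<ge> 0"
      and eq: "\<forall>i\<in>I. (\<Sum>j\<in>J. w j * g j i) = (\<Sum>j\<in>J - {j0}. w' j * g j i)"
      using conic_combination_drop_term[OF assms(1) less.prems(1) _ less.prems(2), of g] by auto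
    have "card (J - {j0}) < card J" using less.prems(1) j0 by (rule card_Diff1_less)
    then obtain J' where "J' \<subseteq> J - {j0}" "card J' \<le> card I"
      "\<exists>w''. (\<forall>j\<in>J'. w'' j \<ge> 0) \<and> (\<forall>i\<in>I. (\<Sum>j\<in>J - {j0}. w' j * g j i) = (\<Sum>j\<in>J'. w'' j * g j i))"
      using less.hyps[of "J - {j0}" w'] less.prems(1) w' by auto
    then show ?thesis using eq by (intro exI[of _ J']) auto
  qed
qed

definition rank_one_sum :: "nat \<Rightarrow> (nat \<Rightarrow> real) \<Rightarrow> (nat \<Rightarrow> nat \<Rightarrow> real) \<Rightarrow> tensor" where
  "rank_one_sum r w u = (\<lambda>is. \<Sum>j<r. w j * prod_list (map (u j) is))"

lemma completely_positive_iff_rank_one_sum: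
  assumes "m \<ge> 1"
  shows "completely_positive m n T \<longleftrightarrow>
    (\<exists>r w u. (\<forall>j<r. w j \<ge> 0 \<and> (\<forall>i\<in>{1..n}. u j i \<ge> 0)) \<and> (\<forall>is\<in>idx m n. T is = rank_one_sum r w u is))"
proof
  assume "completely_positive m n T"
  then obtain r :: nat and xs where "\<forall>j<r. \<forall>i\<in>{1..n}. xs j i \<ge> 0"
    and "\<forall>is\<in>idx m n. T is = (\<Sum>j<r. prod_list (map (xs j) is))"
    unfolding completely_positive_def by blast
  then show "\<exists>r w u. (\<forall>j<r. w j \<ge> 0 \<and> (\<forall>i\<in>{1..n}. u j i \<ge> 0)) \<and> (\<forall>is\<in>idx m n. T is = rank_one_sum r w u is)"
    by (intro exI[of _ r] exI[of _ "\<lambda>_. 1"] exI[of _ xs]) (simp add: rank_one_sum_def)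
next
  assume "\<exists>r w u. (\<forall>j<r. w j \<ge> 0 \<and> (\<forall>i\<in>{1..n}. u j i \<ge> 0)) \<and> (\<forall>is\<in>idx m n. T is = rank_one_sum r w u is)"
  then obtain r w u where nonneg: "\<forall>j<r. w j \<ge> 0 \<and> (\<forall>i\<in>{1..n}. u j i \<ge> 0)"
    and eq: "\<forall>is\<in>idx m n. T is = rank_one_sum r w u is" by blast
  define xs where "xs = (\<lambda>j i. root m (w j) * u j i)"
  have "prod_list (map (xs j) is) = w j * prod_list (map (u j) is)" if "j < r" "is \<in> idx m n" for j "is"
    using that nonneg assms by (simp add: xs_def prod_list_map_const_mult idx_def)
  then have "\<forall>is\<in>idx m n. T is = (\<Sum>j<r. prod_list (map (xs j) is))"
    using eq by (simp add: rank_one_sum_def)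
  moreover have "\<forall>j<r. \<forall>i\<in>{1..n}. xs j i \<ge> 0"
    using nonneg by (auto simp: xs_def intro!: mult_nonneg_nonneg real_root_ge_zero)
  ultimately show "completely_positive m n T" unfolding completely_positive_def by blast
qed

lemma completely_positive_card_idx_terms:
  assumes "completely_positive m n T"
  shows "\<exists>w u. (\<forall>j<card (idx m n). w j \<ge> 0 \<and> (\<forall>i\<in>{1..n}. u j i \<ge> 0)) \<and>
           (\<forall>is\<in>idx m n. T is = rank_one_sum (card (idx m n)) w u is)"
proof -
  obtain r :: nat and xs where xs_nonneg: "\<forall>j<r. \<forall>i\<in>{1..n}. xs j i \<ge> 0"
    and eq: "\<forall>is\<in>idx m n. T is = (\<Sum>j<r. prod_list (map (xs j) is))"
    using assms unfolding completely_positive_def by blast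
  have "\<exists>J\<subseteq>{..<r}. card J \<le> card (idx m n) \<and> (\<exists>w'. (\<forall>j\<in>J. w' j \<ge> 0) \<and>
      (\<forall>is\<in>idx m n. (\<Sum>j<r. 1 * prod_list (map (xs j) is)) = (\<Sum>j\<in>J. w' j * prod_list (map (xs j) is))))"
    by (rule conic_caratheodory) (simp_all add: finite_idx)
  then obtain J w' where J: "J \<subseteq> {..<r}" "card J \<le> card (idx m n)" and w'_nonneg: "\<forall>j\<in>J. w' j \<ge> 0"
    and eq': "\<forall>is\<in>idx m n. (\<Sum>j<r. 1 * prod_list (map (xs j) is)) = (\<Sum>j\<in>J. w' j * prod_list (map (xs j) is))"
    by (elim exE conjE)
  have "finite J" using J(1) by (rule finite_subset) simp
  then obtain h where h: "bij_betw h {..<card J} J"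
    using ex_bij_betw_nat_finite[of J] by (auto simp: atLeast0LessThan)
  define w where "w = (\<lambda>k. if k < card J then w' (h k) else 0)"
  define u where "u = (\<lambda>k. if k < card J then xs (h k) else (\<lambda>_. 0))"
  have hJ: "h k \<in> J" if "k < card J" for k using h that by (auto simp: bij_betw_def)
  have "\<forall>j<card (idx m n). w j \<ge> 0 \<and> (\<forall>i\<in>{1..n}. u j i \<ge> 0)"
    using hJ J(1) w'_nonneg xs_nonneg by (auto simp: w_def u_def subset_eq)
  moreover have "T is = rank_one_sum (card (idx m n)) w u is" if "is \<in> idx m n" for "is"
  proof -
    have "T is = (\<Sum>j\<in>J. w' j * prod_list (map (xs j) is))" using eq eq' that by simp
    also have "\<dots> = (\<Sum>k<card J. w' (h k) * prod_list (map (xs (h k)) is))"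
      by (rule sum.reindex_bij_betw[OF h, symmetric])
    also have "\<dots> = (\<Sum>k<card J. w k * prod_list (map (u k) is))"
      by (simp add: w_def u_def)
    also have "\<dots> = rank_one_sum (card (idx m n)) w u is"
      unfolding rank_one_sum_def using J(2) by (intro sum.mono_neutral_left) (auto simp: w_def)
    finally show ?thesis .
  qed
  ultimately show ?thesis by blast
qed

lemma rank_one_normalize:
  fixes x :: "nat \<Rightarrow> real"
  assumes "m \<ge> 1" and "n \<ge> 1" and "w \<ge> 0" and "\<forall>i\<in>{1..n}. x i \<ge> 0"
  shows "\<exists>w' u. w' \<ge> 0 \<and> (\<forall>i\<in>{1..n}. u i \<ge> 0) \<and> (\<Sum>i\<in>{1..n}. u i) = 1 \<and>
           (\<forall>is\<in>idx m n. w * prod_list (map x is) = w' * prod_list (map u is))"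
proof (cases "(\<Sum>i\<in>{1..n}. x i) = 0")
  case True
  then have "\<forall>i\<in>{1..n}. x i = 0" using assms(4) sum_nonneg_eq_0_iff[of "{1..n}" x] by simp
  then have "prod_list (map x is) = 0" if "is \<in> idx m n" for "is"
    using that assms(1) by (cases "is") (auto simp: idx_def)
  moreover have "(\<Sum>i\<in>{1..n}. if i = 1 then 1 else 0) = (1::real)"
    using assms(2) by simp
  ultimately show ?thesis
    by (intro exI[of _ 0] exI[of _ "\<lambda>i. if i = 1 then 1 else 0"]) auto
next
  case False
  define s where "s = (\<Sum>i\<in>{1..n}. x i)"
  have s: "s > 0" using False assms(4) sum_nonneg[of "{1..n}" x] by (simp add: s_def)
  have "w * prod_list (map x is) = w * s ^ m * prod_list (map (\<lambda>i. x i / s) is)" if "is \<in> idx m n" for "is"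
    using that s prod_list_map_const_mult[of s "\<lambda>i. x i / s" "is"] by (simp add: idx_def)
  moreover have "(\<Sum>i\<in>{1..n}. x i / s) = 1" using s by (simp add: s_def flip: sum_divide_distrib)
  ultimately show ?thesis
    using assms(3,4) s by (intro exI[of _ "w * s ^ m"] exI[of _ "\<lambda>i. x i / s"]) auto
qed

lemma completely_positive_normalized:
  assumes "m \<ge> 1" and "n \<ge> 1" and "completely_positive m n T"
  shows "\<exists>w u. (\<forall>j<card (idx m n). w j \<ge> 0 \<and> (\<forall>i\<in>{1..n}. u j i \<ge> 0) \<and> (\<Sum>i\<in>{1..n}. u j i) = 1) \<and>
           (\<forall>is\<in>idx m n. T is = rank_one_sum (card (idx m n)) w u is)"
proof -
  let ?D = "card (idx m n)"
  obtain w u where nonneg: "\<forall>j<?D. w j \<ge> 0 \<and> (\<forall>i\<in>{1..n}. u j i \<ge> 0)"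
    and eq: "\<forall>is\<in>idx m n. T is = rank_one_sum ?D w u is"
    using completely_positive_card_idx_terms[OF assms(3)] by blast
  have "\<forall>j. \<exists>w' u'. j < ?D \<longrightarrow> w' \<ge> 0 \<and> (\<forall>i\<in>{1..n}. u' i \<ge> 0) \<and> (\<Sum>i\<in>{1..n}. u' i) = 1 \<and>
          (\<forall>is\<in>idx m n. w j * prod_list (map (u j) is) = w' * prod_list (map u' is))"
  proof
    fix j
    show "\<exists>w' u'. j < ?D \<longrightarrow> w' \<ge> 0 \<and> (\<forall>i\<in>{1..n}. u' i \<ge> 0) \<and> (\<Sum>i\<in>{1..n}. u' i) = 1 \<and>
          (\<forall>is\<in>idx m n. w j * prod_list (map (u j) is) = w' * prod_list (map u' is))"
      using rank_one_normalize[OF assms(1,2), of "w j" "u j"] nonneg by (cases "j < ?D") auto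
  qed
  then obtain w' where "\<forall>j. \<exists>u'. j < ?D \<longrightarrow> w' j \<ge> 0 \<and> (\<forall>i\<in>{1..n}. u' i \<ge> 0) \<and> (\<Sum>i\<in>{1..n}. u' i) = 1 \<and>
          (\<forall>is\<in>idx m n. w j * prod_list (map (u j) is) = w' j * prod_list (map u' is))"
    by (rule choice[THEN exE])
  then obtain u' where "\<forall>j<?D. w' j \<ge> 0 \<and> (\<forall>i\<in>{1..n}. u' j i \<ge> 0) \<and> (\<Sum>i\<in>{1..n}. u' j i) = 1 \<and>
          (\<forall>is\<in>idx m n. w j * prod_list (map (u j) is) = w' j * prod_list (map (u' j) is))"
    by (rule choice[THEN exE])
  then show ?thesis
    using eq by (intro exI[of _ w'] exI[of _ u']) (simp add: rank_one_sum_def)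
qed

lemma sum_idx_rank_one_sum:
  assumes "\<forall>j<r. (\<Sum>i\<in>{1..n}. u j i) = 1"
  shows "(\<Sum>is\<in>idx m n. rank_one_sum r w u is) = (\<Sum>j<r. w j)"
proof -
  have "(\<Sum>is\<in>idx m n. rank_one_sum r w u is) = (\<Sum>j<r. w j * (\<Sum>is\<in>idx m n. prod_list (map (u j) is)))"
    unfolding rank_one_sum_def by (subst sum.swap) (simp add: sum_distrib_left)
  then show ?thesis using assms by (simp add: sum_idx_prod_list)
qed

lemma tendsto_prod_list_map:
  fixes F :: "nat \<Rightarrow> 'a \<Rightarrow> real"
  assumes "\<forall>i\<in>set xs. (\<lambda>M. F M i) \<longlonglongrightarrow> a i"
  shows "(\<lambda>M. prod_list (map (F M) xs)) \<longlonglongrightarrow> prod_list (map a xs)"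
  using assms by (induction xs) (auto intro!: tendsto_mult)

lemma bounded_seqs_convergent_subseq:
  fixes X :: "nat \<Rightarrow> 'k \<Rightarrow> real"
  assumes "finite K" and "\<forall>M. \<forall>k\<in>K. \<bar>X M k\<bar> \<le> B"
  shows "\<exists>r. strict_mono r \<and> (\<forall>k\<in>K. convergent (\<lambda>M. X (r M) k))"
  using assms
proof (induction K rule: finite_induct)
  case empty
  show ?case using strict_mono_id by blast
next
  case (insert k0 K)
  then obtain r where r: "strict_mono r" "\<forall>k\<in>K. convergent (\<lambda>M. X (r M) k)" by auto
  obtain f where f: "strict_mono f" "monoseq (\<lambda>M. X (r (f M)) k0)"
    using seq_monosub[of "\<lambda>M. X (r M) k0"] by blast
  have "Bseq (\<lambda>M. X (r (f M)) k0)" using insert.prems by (intro BseqI'[of _ B]) auto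
  then have "convergent (\<lambda>M. X (r (f M)) k0)" using f(2) Bseq_monoseq_convergent by blast
  moreover have "convergent (\<lambda>M. X (r (f M)) k)" if k: "k \<in> K" for k
  proof -
    obtain a where "(\<lambda>M. X (r M) k) \<longlonglongrightarrow> a" using r(2) k by (auto simp: convergent_def)
    from LIMSEQ_subseq_LIMSEQ[OF this f(1)] show ?thesis by (auto simp: convergent_def o_def)
  qed
  moreover have "strict_mono (\<lambda>M. r (f M))" using strict_mono_o[OF r(1) f(1)] by (simp add: o_def)
  ultimately show ?case by (intro exI[of _ "\<lambda>M. r (f M)"]) auto
qed

lemma bounded_rank_one_data_convergent_subseq:
  fixes W :: "nat \<Rightarrow> nat \<Rightarrow> real" and U :: "nat \<Rightarrow> nat \<Rightarrow> nat \<Rightarrow> real"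
  assumes "\<forall>M. \<forall>j<D. \<bar>W M j\<bar> \<le> B \<and> (\<forall>i\<in>{1..n}. \<bar>U M j i\<bar> \<le> B)"
  shows "\<exists>r W0 U0. strict_mono r \<and> (\<forall>j<D. (\<lambda>M. W (r M) j) \<longlonglongrightarrow> W0 j) \<and>
           (\<forall>j<D. \<forall>i\<in>{1..n}. (\<lambda>M. U (r M) j i) \<longlonglongrightarrow> U0 j i)"
proof -
  define X where "X = (\<lambda>M. case_sum (W M) (\<lambda>(j, i). U M j i))"
  define K where "K = Inl ` {..<D} \<union> Inr ` ({..<D} \<times> {1..n})"
  have "finite K" by (simp add: K_def)
  moreover have "\<forall>M. \<forall>k\<in>K. \<bar>X M k\<bar> \<le> B" using assms by (auto simp: K_def X_def)
  ultimately obtain r where r: "strict_mono r" "\<forall>k\<in>K. convergent (\<lambda>M. X (r M) k)"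
    by (blast dest: bounded_seqs_convergent_subseq)
  have "(\<lambda>M. W (r M) j) \<longlonglongrightarrow> lim (\<lambda>M. W (r M) j)" if "j < D" for j
    using r(2)[rule_format, of "Inl j"] that by (simp add: K_def X_def convergent_LIMSEQ_iff)
  moreover have "(\<lambda>M. U (r M) j i) \<longlonglongrightarrow> lim (\<lambda>M. U (r M) j i)" if "j < D" "i \<in> {1..n}" for j i
    using r(2)[rule_format, of "Inr (j, i)"] that by (simp add: K_def X_def convergent_LIMSEQ_iff)
  ultimately show ?thesis using r(1)
    by (intro exI[of _ r] exI[of _ "\<lambda>j. lim (\<lambda>M. W (r M) j)"] exI[of _ "\<lambda>j i. lim (\<lambda>M. U (r M) j i)"]) blast
qed

lemma completely_positive_closed:
  assumes "m \<ge> 1" and "n \<ge> 1" and "\<forall>M. completely_positive m n (T M)"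
    and lim: "\<forall>is\<in>idx m n. (\<lambda>M. T M is) \<longlonglongrightarrow> L is"
  shows "completely_positive m n L"
proof -
  let ?D = "card (idx m n)"
  have "\<forall>M. \<exists>w u. (\<forall>j<?D. w j \<ge> 0 \<and> (\<forall>i\<in>{1..n}. u j i \<ge> 0) \<and> (\<Sum>i\<in>{1..n}. u j i) = 1) \<and>
      (\<forall>is\<in>idx m n. T M is = rank_one_sum ?D w u is)"
    using completely_positive_normalized[OF assms(1,2)] assms(3) by blast
  then obtain W where "\<forall>M. \<exists>u. (\<forall>j<?D. W M j \<ge> 0 \<and> (\<forall>i\<in>{1..n}. u j i \<ge> 0) \<and> (\<Sum>i\<in>{1..n}. u j i) = 1) \<and>
      (\<forall>is\<in>idx m n. T M is = rank_one_sum ?D (W M) u is)"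
    by (rule choice[THEN exE])
  then obtain U where "\<forall>M. (\<forall>j<?D. W M j \<ge> 0 \<and> (\<forall>i\<in>{1..n}. U M j i \<ge> 0) \<and> (\<Sum>i\<in>{1..n}. U M j i) = 1) \<and>
      (\<forall>is\<in>idx m n. T M is = rank_one_sum ?D (W M) (U M) is)"
    by (rule choice[THEN exE])
  then have WU: "\<forall>M. \<forall>j<?D. W M j \<ge> 0 \<and> (\<forall>i\<in>{1..n}. U M j i \<ge> 0) \<and> (\<Sum>i\<in>{1..n}. U M j i) = 1"
    and eq: "\<forall>M. \<forall>is\<in>idx m n. T M is = rank_one_sum ?D (W M) (U M) is"
    by auto
  \<comment> \<open>the weights are bounded because their sum is the total mass of \<open>T M\<close>, which converges\<close>
  have "Bseq (\<lambda>M. \<Sum>is\<in>idx m n. T M is)"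
    using lim by (intro convergent_imp_Bseq convergentI[where L = "\<Sum>is\<in>idx m n. L is"] tendsto_sum) auto
  then obtain B where B: "\<forall>M. \<bar>\<Sum>is\<in>idx m n. T M is\<bar> \<le> B"
    unfolding Bseq_def by auto
  have bounded: "\<forall>M. \<forall>j<?D. \<bar>W M j\<bar> \<le> max B 1 \<and> (\<forall>i\<in>{1..n}. \<bar>U M j i\<bar> \<le> max B 1)"
  proof (intro allI impI)
    fix M j assume j: "j < ?D"
    have "W M j \<le> (\<Sum>j<?D. W M j)" using WU j by (intro member_le_sum) auto
    also have "\<dots> = (\<Sum>is\<in>idx m n. T M is)"
      using eq WU by (simp add: sum_idx_rank_one_sum)
    finally have "W M j \<le> B" using B by (metis abs_ge_self order_trans)
    moreover have "U M j i \<le> 1" if "i \<in> {1..n}" for i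
      using WU j that member_le_sum[of i "{1..n}" "U M j"] by auto
    ultimately show "\<bar>W M j\<bar> \<le> max B 1 \<and> (\<forall>i\<in>{1..n}. \<bar>U M j i\<bar> \<le> max B 1)"
      using WU j by (force simp: le_max_iff_disj)
  qed
  obtain r W0 U0 where r: "strict_mono r" and W0: "\<forall>j<?D. (\<lambda>M. W (r M) j) \<longlonglongrightarrow> W0 j"
    and U0: "\<forall>j<?D. \<forall>i\<in>{1..n}. (\<lambda>M. U (r M) j i) \<longlonglongrightarrow> U0 j i"
    using bounded_rank_one_data_convergent_subseq[OF bounded] by blast
  have "L is = rank_one_sum ?D W0 U0 is" if "is \<in> idx m n" for "is"
  proof (rule LIMSEQ_unique)
    show "(\<lambda>M. T (r M) is) \<longlonglongrightarrow> L is"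
      using LIMSEQ_subseq_LIMSEQ[OF lim[rule_format, OF that] r] by (simp add: o_def)
    have "set is \<subseteq> {1..n}" using that by (simp add: idx_def)
    then show "(\<lambda>M. T (r M) is) \<longlonglongrightarrow> rank_one_sum ?D W0 U0 is"
      using eq that W0 U0 unfolding rank_one_sum_def
      by (auto intro!: tendsto_sum tendsto_mult tendsto_prod_list_map)
  qed
  moreover have "W0 j \<ge> 0" if "j < ?D" for j
    using W0 WU that by (intro LIMSEQ_le_const[of "\<lambda>M. W (r M) j"]) auto
  moreover have "U0 j i \<ge> 0" if "j < ?D" "i \<in> {1..n}" for j i
    using U0 WU that by (intro LIMSEQ_le_const[of "\<lambda>M. U (r M) j i"]) auto
  ultimately show ?thesis
    unfolding completely_positive_iff_rank_one_sum[OF assms(1)]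
    by (intro exI[of _ ?D] exI[of _ W0] exI[of _ U0]) blast
qed

lemma exp_riemann_sum_eq:
  fixes s :: real
  assumes "s > 0"
  shows "(\<Sum>k<Suc M * Suc M. exp (- (real k / real (Suc M)) * s) / real (Suc M))
    = (1 - exp (- s) ^ Suc M) / s * (s / real (Suc M) / (1 - exp (- (s / real (Suc M)))))"
proof -
  define y where "y = s / real (Suc M)"
  let ?q = "exp (- y)"
  have y: "y > 0" using assms by (simp add: y_def)
  then have q: "?q \<noteq> 1" by simp
  have power_q: "exp (- (real k / real (Suc M)) * s) = ?q ^ k" for k
    by (simp add: y_def flip: exp_of_nat_mult)
  have "(\<Sum>k<Suc M * Suc M. exp (- (real k / real (Suc M)) * s) / real (Suc M))
      = (\<Sum>k<Suc M * Suc M. ?q ^ k) / real (Suc M)"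
    by (simp only: power_q sum_divide_distrib)
  also have "\<dots> = (1 - ?q ^ (Suc M * Suc M)) / (1 - ?q) / real (Suc M)"
    using q by (simp only: sum_gp_strict if_False)
  also have "?q ^ (Suc M * Suc M) = exp (- s) ^ Suc M"
  proof -
    have "real (Suc M * Suc M) * - y = real (Suc M) * - s"
      unfolding y_def of_nat_mult by (simp del: of_nat_Suc)
    then show ?thesis by (metis exp_of_nat_mult)
  qed
  also have "(1 - exp (- s) ^ Suc M) / (1 - ?q) / real (Suc M) = (1 - exp (- s) ^ Suc M) / s * (y / (1 - ?q))"
    using assms by (simp add: y_def)
  finally show ?thesis unfolding y_def .
qed

lemma exp_riemann_sum_tendsto:
  fixes s :: real
  assumes "s > 0"
  shows "(\<lambda>M. \<Sum>k<Suc M * Suc M. exp (- (real k / real (Suc M)) * s) / real (Suc M)) \<longlonglongrightarrow> 1 / s"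
proof -
  define y where "y = (\<lambda>M. s / real (Suc M))"
  have "((\<lambda>z::real. z / (exp z - 1)) \<longlongrightarrow> 1) (at 0)"
    using tendsto_inverse[OF DERIV_exp[of 0, unfolded DERIV_def]] by simp
  moreover have "filterlim (\<lambda>M. - y M) (at 0) sequentially"
  proof -
    have "(\<lambda>M. - y M) \<longlonglongrightarrow> 0"
      unfolding y_def using tendsto_minus[OF LIMSEQ_Suc[OF lim_const_over_n[of s]]] by simp
    moreover have "\<forall>M. - y M \<noteq> 0" using assms by (simp add: y_def)
    ultimately show ?thesis by (simp add: filterlim_at)
  qed
  ultimately have "(\<lambda>M. - y M / (exp (- y M) - 1)) \<longlonglongrightarrow> 1"
    by (rule filterlim_compose)
  moreover have "- y M / (exp (- y M) - 1) = y M / (1 - exp (- y M))" for M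
    by (metis minus_diff_eq divide_minus_right minus_divide_left)
  ultimately have "(\<lambda>M. (1 - exp (- s) ^ Suc M) / s * (y M / (1 - exp (- y M)))) \<longlonglongrightarrow> (1 - 0) / s * 1"
    using assms by (intro tendsto_intros LIMSEQ_Suc[OF LIMSEQ_power_zero]) auto
  then show ?thesis by (simp only: exp_riemann_sum_eq[OF assms] y_def diff_zero mult_1_right)
qed

lemma cauchy_tensor_completely_positive:
  assumes "m \<ge> 1" and "n \<ge> 1" and pos: "\<forall>i\<in>{1..n}. c i > 0"
  shows "completely_positive m n (cauchy_tensor c)"
proof -
  \<comment> \<open>Riemann sums of \<open>1 / s = \<integral>\<^sub>0\<^sup>\<infinity> exp (- t s) dt\<close>\<close>
  define T where "T = (\<lambda>M. rank_one_sum (Suc M * Suc M) (\<lambda>_. 1 / real (Suc M))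
                            (\<lambda>k i. exp (- (real k / real (Suc M)) * c i)))"
  have "completely_positive m n (T M)" for M
    unfolding completely_positive_iff_rank_one_sum[OF assms(1)] T_def
    by (intro exI[of _ "Suc M * Suc M"] exI[of _ "\<lambda>_. 1 / real (Suc M)"]
        exI[of _ "\<lambda>k i. exp (- (real k / real (Suc M)) * c i)"]) simp
  moreover have "(\<lambda>M. T M is) \<longlonglongrightarrow> cauchy_tensor c is" if "is \<in> idx m n" for "is"
  proof -
    have "is \<noteq> []" and "set is \<subseteq> {1..n}" using that assms(1) by (auto simp: idx_def)
    then have "sum_list (map c is) > 0" using pos by (intro sum_list_map_pos) auto
    moreover have "T M is = (\<Sum>k<Suc M * Suc M. exp (- (real k / real (Suc M)) * sum_list (map c is)) / real (Suc M))" for M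
      unfolding T_def rank_one_sum_def prod_list_map_exp sum_list_const_mult by simp
    ultimately show ?thesis
      using exp_riemann_sum_tendsto by (simp add: cauchy_tensor_def)
  qed
  ultimately show ?thesis using completely_positive_closed[OF assms(1,2)] by blast
qed

theorem corollary3p1:
  fixes m n :: nat and c :: "nat \<Rightarrow> real"
  assumes "even m" and "m \<ge> 2" and "n \<ge> 2"
    and "\<forall>is\<in>idx m n. sum_list (map c is) \<noteq> 0"
  shows "(sos_tensor m n (cauchy_tensor c) \<longleftrightarrow> psd_tensor m n (cauchy_tensor c))
       \<and> (psd_tensor m n (cauchy_tensor c) \<longleftrightarrow> completely_positive m n (cauchy_tensor c))
       \<and> (completely_positive m n (cauchy_tensor c) \<longleftrightarrow> (\<forall>i\<in>{1..n}. c i > 0))"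
proof -
  have m: "m \<ge> 1" and n: "n \<ge> 1" using assms(2,3) by simp_all
  have c_nonzero: "c i \<noteq> 0" if "i \<in> {1..n}" for i
  proof -
    have "replicate m i \<in> idx m n" using that by (auto simp: idx_def)
    then show ?thesis using assms(4) by (force simp: sum_list_replicate)
  qed
  have "sos_tensor m n (cauchy_tensor c) \<Longrightarrow> psd_tensor m n (cauchy_tensor c)"
    by (rule sos_tensor_imp_psd_tensor)
  moreover have "c i > 0" if "psd_tensor m n (cauchy_tensor c)" and "i \<in> {1..n}" for i
    using psd_cauchy_tensor_imp_pos[OF that(1) m c_nonzero[OF that(2)] that(2)] .
  moreover have "\<forall>i\<in>{1..n}. c i > 0 \<Longrightarrow> completely_positive m n (cauchy_tensor c)"
    by (rule cauchy_tensor_completely_positive[OF m n])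
  moreover have "completely_positive m n (cauchy_tensor c) \<Longrightarrow> sos_tensor m n (cauchy_tensor c)"
    using completely_positive_imp_sos_tensor assms(1) by blast
  ultimately show ?thesis by blast
qed

end
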